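(* For all $m,n\in\mathbb{N}$ with $m\le n$, the minimization problem defining $d_{m,n}$ admits an optimal transport plan $z\in\mathcal{F}_{m,n}$ that is simple, i.e. satisfies $z_{i,i}=\min\{\pi^m_i,\pi^n_i\}$ for all $i=0,\dots,m$.
   Context: Let $\mathbb{N}=\{0,1,2,\dots\}$. Fix a sequence $(\pi^n)_{n\in\mathbb{N}}$ where each $\pi^n=(\pi^n_i)_{i\in\mathbb{N}}$ is a probability distribution on $\mathbb{N}$ with support contained in $\{0,\dots,n\}$, and $\pi^n\ne\pi^m$ for $m\ne n$. Define reals $d_{m,n}$ for $m,n\in\mathbb{N}\cup\{-1\}$ recursively as follows: $d_{-1,-1}=0$, $d_{-1,j}=d_{j,-1}=1$ for $j\in\mathbb{N}$, and for $m,n\in\mathbb{N}$, $$d_{m,n}=\min_{z\in\mathcal{F}_{m,n}}\sum_{i=0}^m\sum_{j=0}^n z_{i,j}\,d_{i-1,j-1},$$ where $\mathcal{F}_{m,n}$ is the set of transport plans from $\pi^m$ to $\pi^n$, i.e. arrays $z=(z_{i,j})_{0\le i\le m,\,0\le j\le n}$ with $z_{i,j}\ge0$, $\sum_{j=0}^n z_{i,j}=\pi^m_i$ for all $i\le m$, and $\sum_{i=0}^m z_{i,j}=\pi^n_j$ for all $j\le n$. An optimal transport for $d_{m,n}$ is a minimizer of this problem. *)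

theory Defs
  imports Main "HOL.Real"
begin

text \<open>A sequence of distributions is modelled as pi :: nat => nat => real,
  pi n i being the mass of pi^n at i.\<close>

definition transport_plans :: "(nat \<Rightarrow> nat \<Rightarrow> real) \<Rightarrow> nat \<Rightarrow> nat \<Rightarrow> (nat \<Rightarrow> nat \<Rightarrow> real) set" where
  "transport_plans pi m n =
     {z. (\<forall>i\<le>m. \<forall>j\<le>n. 0 \<le> z i j)
       \<and> (\<forall>i\<le>m. (\<Sum>j\<le>n. z i j) = pi m i)
       \<and> (\<forall>j\<le>n. (\<Sum>i\<le>m. z i j) = pi n j)}"

text \<open>Shifted distance: dsh pi a b = d_{a-1,b-1}; index 0 plays the role of -1.\<close>
function dsh :: "(nat \<Rightarrow> nat \<Rightarrow> real) \<Rightarrow> nat \<Rightarrow> nat \<Rightarrow> real" where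
  "dsh pi 0 0 = 0"
| "dsh pi 0 (Suc j) = 1"
| "dsh pi (Suc i) 0 = 1"
| "dsh pi (Suc m) (Suc n) =
     Inf ((\<lambda>z. \<Sum>i\<le>m. \<Sum>j\<le>n. z i j * dsh pi i j) ` transport_plans pi m n)"
  by pat_completeness auto
termination
  by (relation "measure (\<lambda>(pi, a, b). a + b)") auto

definition tcost :: "(nat \<Rightarrow> nat \<Rightarrow> real) \<Rightarrow> nat \<Rightarrow> nat \<Rightarrow> (nat \<Rightarrow> nat \<Rightarrow> real) \<Rightarrow> real" where
  "tcost pi m n z = (\<Sum>i\<le>m. \<Sum>j\<le>n. z i j * dsh pi i j)"

definition dist_d :: "(nat \<Rightarrow> nat \<Rightarrow> real) \<Rightarrow> nat \<Rightarrow> nat \<Rightarrow> real" where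
  "dist_d pi m n = dsh pi (Suc m) (Suc n)"

end

theory Submission
  imports Defs "HOL-Analysis.Elementary_Metric_Spaces"
begin

text \<open>
  Optimal plans exist by compactness, and the recursively defined costs form a pseudometric:
  the triangle inequality is proved by induction, gluing two optimal plans along their
  common marginal. Among the optimal plans pick one with maximal diagonal mass. If some
  diagonal entry \<open>z i i\<close> were below \<open>min (\<pi>\<^sup>m\<^sub>i) (\<pi>\<^sup>n\<^sub>i)\<close>, row \<open>i\<close> would send
  mass to some \<open>j \<noteq> i\<close> and column \<open>i\<close> receive mass from some \<open>k \<noteq> i\<close>; rerouting
  \<open>\<epsilon>\<close> along \<open>(i,j), (k,i) \<leadsto> (i,i), (k,j)\<close> keeps the marginals, does not increase
  the cost since \<open>d(k,j) \<le> d(k,i) + d(i,j)\<close> and \<open>d(i,i) = 0\<close>, and strictly increases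
  the diagonal mass.
\<close>

lemma seq_closed_bounded_attains_min:
  fixes P :: "('a \<Rightarrow> 'b \<Rightarrow> real) set" and f :: "('a \<Rightarrow> 'b \<Rightarrow> real) \<Rightarrow> real"
  assumes "finite I" "finite J" "P \<noteq> {}" "bdd_below (f ` P)"
    and bounded: "\<And>z i j. z \<in> P \<Longrightarrow> i \<in> I \<Longrightarrow> j \<in> J \<Longrightarrow> \<bar>z i j\<bar> \<le> B"
    and closed: "\<And>zs z. (\<forall>k. zs k \<in> P) \<Longrightarrow> (\<forall>i\<in>I. \<forall>j\<in>J. (\<lambda>k. zs k i j) \<longlonglongrightarrow> z i j) \<Longrightarrow> z \<in> P"
    and continuous: "\<And>zs z. (\<forall>i\<in>I. \<forall>j\<in>J. (\<lambda>k. zs k i j) \<longlonglongrightarrow> z i j) \<Longrightarrow>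
                       (\<lambda>k. f (zs k)) \<longlonglongrightarrow> f z"
  shows "\<exists>z\<in>P. \<forall>z'\<in>P. f z \<le> f z'"
proof -
  define L where "L = Inf (f ` P)"
  have "\<exists>z\<in>P. f z < L + inverse (real (Suc k))" for k
    using cInf_lessD[of "f ` P" "L + inverse (real (Suc k))"] \<open>P \<noteq> {}\<close> by (auto simp: L_def)
  then obtain zs where zs: "\<And>k. zs k \<in> P" "\<And>k. f (zs k) < L + inverse (real (Suc k))"
    by metis
  have "\<exists>l r. strict_mono r \<and> (\<forall>\<epsilon>>0. \<forall>\<^sub>F k in sequentially.
          \<forall>a\<in>I \<times> J. dist (case_prod (zs (r k)) a) (l a) < \<epsilon>)"
  proof (rule compact_lemma_general[where proj = "\<lambda>x a. x a" and unproj = id, rule_format])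
    show "bounded ((\<lambda>x. x a) ` range (\<lambda>k. case_prod (zs k)))" if "a \<in> I \<times> J" for a
      using that bounded zs(1) unfolding bounded_iff by fastforce
  qed (use \<open>finite I\<close> \<open>finite J\<close> in auto)
  then obtain l r where r: "strict_mono r"
    and l: "\<And>\<epsilon>. \<epsilon> > 0 \<Longrightarrow>
              \<forall>\<^sub>F k in sequentially. \<forall>a\<in>I \<times> J. dist (case_prod (zs (r k)) a) (l a) < \<epsilon>"
    by blast
  define z where "z = curry l"
  have lim: "\<forall>i\<in>I. \<forall>j\<in>J. (\<lambda>k. zs (r k) i j) \<longlonglongrightarrow> z i j"
    by (auto simp: z_def tendsto_iff elim!: eventually_mono[OF l])
  have "z \<in> P" using closed[of "zs \<circ> r"] zs(1) lim by simp
  have "f z \<le> L"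
  proof (rule LIMSEQ_le)
    show "(\<lambda>k. f (zs (r k))) \<longlonglongrightarrow> f z" using continuous lim by simp
    have "(\<lambda>k. L + inverse (real (Suc k))) \<longlonglongrightarrow> L + 0"
      by (intro tendsto_add tendsto_const LIMSEQ_inverse_real_of_nat)
    then show "(\<lambda>k. L + inverse (real (Suc (r k)))) \<longlonglongrightarrow> L"
      using LIMSEQ_subseq_LIMSEQ[OF _ r] by (simp add: o_def)
    show "\<exists>N. \<forall>k\<ge>N. f (zs (r k)) \<le> L + inverse (real (Suc (r k)))"
      using zs(2) less_imp_le by blast
  qed
  moreover have "L \<le> f z'" if "z' \<in> P" for z'
    unfolding L_def using \<open>bdd_below (f ` P)\<close> that by (auto intro: cInf_lower)
  ultimately show ?thesis using \<open>z \<in> P\<close> by force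
qed

lemma exists_other_pos_if_lt_sum:
  fixes f :: "'a \<Rightarrow> real"
  assumes "finite A" "a \<in> A" "\<And>b. b \<in> A \<Longrightarrow> 0 \<le> f b" "f a < sum f A"
  shows "\<exists>b\<in>A - {a}. 0 < f b"
proof (rule ccontr)
  assume "\<not> ?thesis"
  then have "sum f (A - {a}) \<le> 0" by (intro sum_nonpos) (auto simp: not_less)
  then show False using assms by (simp add: sum.remove)
qed

lemma nat_pair_Suc_induct [case_names zero_left zero_right Suc_Suc]:
  assumes "\<And>b. P 0 b" "\<And>a. P a 0"
    and "\<And>m n. (\<And>i j. i \<le> m \<Longrightarrow> j \<le> n \<Longrightarrow> P i j) \<Longrightarrow> P (Suc m) (Suc n)"
  shows "P a b"
proof (induction "a + b" arbitrary: a b rule: less_induct)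
  case less
  show ?case
    using assms less by (cases a; cases b) auto
qed

section \<open>Transport plans\<close>

definition optimal_plans :: "(nat \<Rightarrow> nat \<Rightarrow> real) \<Rightarrow> nat \<Rightarrow> nat \<Rightarrow> (nat \<Rightarrow> nat \<Rightarrow> real) set" where
  "optimal_plans p m n = {z \<in> transport_plans p m n.
     \<forall>z'\<in>transport_plans p m n. tcost p m n z \<le> tcost p m n z'}"

context
  fixes pi :: "nat \<Rightarrow> nat \<Rightarrow> real"
begin

lemma transport_plansD:
  assumes "z \<in> transport_plans pi m n"
  shows "\<And>i j. i \<le> m \<Longrightarrow> j \<le> n \<Longrightarrow> 0 \<le> z i j"
    and "\<And>i. i \<le> m \<Longrightarrow> (\<Sum>j\<le>n. z i j) = pi m i"
    and "\<And>j. j \<le> n \<Longrightarrow> (\<Sum>i\<le>m. z i j) = pi n j"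
  using assms unfolding transport_plans_def by auto

lemma plan_entry_le_row_mass:
  assumes "z \<in> transport_plans pi m n" "i \<le> m" "j \<le> n"
  shows "z i j \<le> pi m i"
  using member_le_sum[of j "{..n}" "z i"] transport_plansD[OF assms(1)] assms(2,3) by auto

lemma plan_entry_le_col_mass:
  assumes "z \<in> transport_plans pi m n" "i \<le> m" "j \<le> n"
  shows "z i j \<le> pi n j"
  using member_le_sum[of i "{..m}" "\<lambda>i. z i j"] transport_plansD[OF assms(1)] assms(2,3) by auto

lemma transport_plans_closed:
  assumes "\<forall>k. zs k \<in> transport_plans pi m n"
    and lim: "\<forall>i\<le>m. \<forall>j\<le>n. (\<lambda>k. zs k i j) \<longlonglongrightarrow> z i j"
  shows "z \<in> transport_plans pi m n"
  unfolding transport_plans_def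
proof (intro CollectI conjI allI impI)
  fix i j assume "i \<le> m" "j \<le> n"
  then show "0 \<le> z i j"
    using assms by (intro LIMSEQ_le_const[of "\<lambda>k. zs k i j"]) (auto simp: transport_plans_def)
next
  fix i assume "i \<le> m"
  then have "(\<lambda>k. \<Sum>j\<le>n. zs k i j) \<longlonglongrightarrow> (\<Sum>j\<le>n. z i j)"
    using lim by (intro tendsto_sum) auto
  moreover have "(\<lambda>k. \<Sum>j\<le>n. zs k i j) = (\<lambda>k. pi m i)"
    using assms(1) \<open>i \<le> m\<close> by (auto simp: transport_plans_def)
  ultimately show "(\<Sum>j\<le>n. z i j) = pi m i"
    using LIMSEQ_unique tendsto_const by metis
next
  fix j assume "j \<le> n"
  then have "(\<lambda>k. \<Sum>i\<le>m. zs k i j) \<longlonglongrightarrow> (\<Sum>i\<le>m. z i j)"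
    using lim by (intro tendsto_sum) auto
  moreover have "(\<lambda>k. \<Sum>i\<le>m. zs k i j) = (\<lambda>k. pi n j)"
    using assms(1) \<open>j \<le> n\<close> by (auto simp: transport_plans_def)
  ultimately show "(\<Sum>i\<le>m. z i j) = pi n j"
    using LIMSEQ_unique tendsto_const by metis
qed

lemma transport_plans_add_balanced:
  assumes "z \<in> transport_plans pi m n"
    and "\<And>i. i \<le> m \<Longrightarrow> (\<Sum>j\<le>n. e i j) = 0" "\<And>j. j \<le> n \<Longrightarrow> (\<Sum>i\<le>m. e i j) = 0"
    and "\<And>i j. i \<le> m \<Longrightarrow> j \<le> n \<Longrightarrow> 0 \<le> z i j + e i j"
  shows "(\<lambda>i j. z i j + e i j) \<in> transport_plans pi m n"
  using assms transport_plansD[OF assms(1)]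
  unfolding transport_plans_def by (simp add: sum.distrib)

lemma tcost_add: "tcost pi m n (\<lambda>i j. z i j + e i j) = tcost pi m n z + tcost pi m n e"
  unfolding tcost_def by (simp add: distrib_right sum.distrib)

lemma tcost_scale: "tcost pi m n (\<lambda>i j. c * e i j) = c * tcost pi m n e"
  unfolding tcost_def by (simp add: sum_distrib_left mult.assoc)

lemma tcost_tendsto:
  assumes "\<forall>i\<le>m. \<forall>j\<le>n. (\<lambda>k. zs k i j) \<longlonglongrightarrow> z i j"
  shows "(\<lambda>k. tcost pi m n (zs k)) \<longlonglongrightarrow> tcost pi m n z"
  unfolding tcost_def using assms by (intro tendsto_sum tendsto_mult_right) auto

lemma optimal_plans_closed:
  assumes zs: "\<forall>k. zs k \<in> optimal_plans pi m n"
    and lim: "\<forall>i\<le>m. \<forall>j\<le>n. (\<lambda>k. zs k i j) \<longlonglongrightarrow> z i j"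
  shows "z \<in> optimal_plans pi m n"
proof -
  have "z \<in> transport_plans pi m n"
    using transport_plans_closed[OF _ lim] zs by (simp add: optimal_plans_def)
  moreover have "tcost pi m n z \<le> tcost pi m n z'" if "z' \<in> transport_plans pi m n" for z'
    using LIMSEQ_le_const2[OF tcost_tendsto[OF lim]] zs that by (auto simp: optimal_plans_def)
  ultimately show ?thesis by (simp add: optimal_plans_def)
qed

lemma dsh_Suc_Suc: "dsh pi (Suc m) (Suc n) = Inf (tcost pi m n ` transport_plans pi m n)"
  by (simp add: tcost_def[abs_def])

declare dsh.simps(4)[simp del]

lemma dsh_0_left: "dsh pi 0 b = (if b = 0 then 0 else 1)"
  by (cases b) simp_all

lemma dsh_0_right: "dsh pi a 0 = (if a = 0 then 0 else 1)"
  by (cases a) simp_all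

end

section \<open>Gluing two plans\<close>

text \<open>Division by a zero marginal \<open>p m j\<close> yields \<open>0\<close>, which is right: the
  entries \<open>z1 i j\<close> and \<open>z2 j k\<close> then vanish as well.\<close>

definition glue :: "(nat \<Rightarrow> nat \<Rightarrow> real) \<Rightarrow> nat \<Rightarrow> (nat \<Rightarrow> nat \<Rightarrow> real) \<Rightarrow> (nat \<Rightarrow> nat \<Rightarrow> real)
    \<Rightarrow> nat \<Rightarrow> nat \<Rightarrow> nat \<Rightarrow> real" where
  "glue p m z1 z2 i j k = z1 i j * z2 j k / p m j"

context
  fixes pi z1 z2 :: "nat \<Rightarrow> nat \<Rightarrow> real" and l m n :: nat
  assumes z1: "z1 \<in> transport_plans pi l m" and z2: "z2 \<in> transport_plans pi m n"
begin

lemma glue_nonneg: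
  assumes "i \<le> l" "j \<le> m" "k \<le> n"
  shows "0 \<le> glue pi m z1 z2 i j k"
proof -
  have "0 \<le> (\<Sum>i\<le>l. z1 i j)"
    using transport_plansD(1)[OF z1 _ \<open>j \<le> m\<close>] by (intro sum_nonneg) simp
  then have "0 \<le> pi m j" using transport_plansD(3)[OF z1 \<open>j \<le> m\<close>] by simp
  then show ?thesis
    unfolding glue_def using transport_plansD(1)[OF z1] transport_plansD(1)[OF z2] assms
    by (intro divide_nonneg_nonneg mult_nonneg_nonneg) auto
qed

lemma glue_sum_last:
  assumes "i \<le> l" "j \<le> m"
  shows "(\<Sum>k\<le>n. glue pi m z1 z2 i j k) = z1 i j"
proof (cases "pi m j = 0")
  case True
  then show ?thesis
    using plan_entry_le_col_mass[OF z1 assms] transport_plansD(1)[OF z1 assms]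
    by (simp add: glue_def)
next
  case False
  have "(\<Sum>k\<le>n. glue pi m z1 z2 i j k) = z1 i j * (\<Sum>k\<le>n. z2 j k) / pi m j"
    unfolding glue_def by (simp add: sum_distrib_left sum_divide_distrib)
  then show ?thesis using transport_plansD(2)[OF z2 \<open>j \<le> m\<close>] False by simp
qed

lemma glue_sum_first:
  assumes "j \<le> m" "k \<le> n"
  shows "(\<Sum>i\<le>l. glue pi m z1 z2 i j k) = z2 j k"
proof (cases "pi m j = 0")
  case True
  then show ?thesis
    using plan_entry_le_row_mass[OF z2 assms] transport_plansD(1)[OF z2 assms]
    by (simp add: glue_def)
next
  case False
  have "(\<Sum>i\<le>l. glue pi m z1 z2 i j k) = (\<Sum>i\<le>l. z1 i j) * z2 j k / pi m j"
    unfolding glue_def by (simp add: sum_distrib_right sum_divide_distrib)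
  then show ?thesis using transport_plansD(3)[OF z1 \<open>j \<le> m\<close>] False by simp
qed

lemma glued_plan: "(\<lambda>i k. \<Sum>j\<le>m. glue pi m z1 z2 i j k) \<in> transport_plans pi l n"
  unfolding transport_plans_def
proof (intro CollectI conjI allI impI)
  fix i k assume "i \<le> l" "k \<le> n"
  then show "0 \<le> (\<Sum>j\<le>m. glue pi m z1 z2 i j k)" by (intro sum_nonneg glue_nonneg) auto
next
  fix i assume "i \<le> l"
  then show "(\<Sum>k\<le>n. \<Sum>j\<le>m. glue pi m z1 z2 i j k) = pi l i"
    by (subst sum.swap) (simp add: glue_sum_last transport_plansD(2)[OF z1])
next
  fix k assume "k \<le> n"
  then show "(\<Sum>i\<le>l. \<Sum>j\<le>m. glue pi m z1 z2 i j k) = pi n k"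
    by (subst sum.swap) (simp add: glue_sum_first transport_plansD(3)[OF z2])
qed

lemma tcost_glued_plan_le:
  assumes tri: "\<And>i j k. i \<le> l \<Longrightarrow> j \<le> m \<Longrightarrow> k \<le> n \<Longrightarrow> dsh pi i k \<le> dsh pi i j + dsh pi j k"
  shows "tcost pi l n (\<lambda>i k. \<Sum>j\<le>m. glue pi m z1 z2 i j k)
           \<le> tcost pi l m z1 + tcost pi m n z2"
proof -
  let ?q = "glue pi m z1 z2" and ?c = "dsh pi"
  have first: "(\<Sum>i\<le>l. \<Sum>k\<le>n. \<Sum>j\<le>m. ?q i j k * ?c i j) = tcost pi l m z1"
  proof -
    have "(\<Sum>i\<le>l. \<Sum>k\<le>n. \<Sum>j\<le>m. ?q i j k * ?c i j)
            = (\<Sum>i\<le>l. \<Sum>j\<le>m. \<Sum>k\<le>n. ?q i j k * ?c i j)"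
      by (intro sum.cong refl sum.swap)
    then show ?thesis
      unfolding tcost_def by (simp add: glue_sum_last flip: sum_distrib_right)
  qed
  have second: "(\<Sum>i\<le>l. \<Sum>k\<le>n. \<Sum>j\<le>m. ?q i j k * ?c j k) = tcost pi m n z2"
  proof -
    have "(\<Sum>i\<le>l. \<Sum>k\<le>n. \<Sum>j\<le>m. ?q i j k * ?c j k)
            = (\<Sum>i\<le>l. \<Sum>j\<le>m. \<Sum>k\<le>n. ?q i j k * ?c j k)"
      by (intro sum.cong refl sum.swap)
    also have "\<dots> = (\<Sum>j\<le>m. \<Sum>i\<le>l. \<Sum>k\<le>n. ?q i j k * ?c j k)"
      by (rule sum.swap)
    also have "\<dots> = (\<Sum>j\<le>m. \<Sum>k\<le>n. \<Sum>i\<le>l. ?q i j k * ?c j k)"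
      by (intro sum.cong refl sum.swap)
    finally show ?thesis
      unfolding tcost_def by (simp add: glue_sum_first flip: sum_distrib_right)
  qed
  have "tcost pi l n (\<lambda>i k. \<Sum>j\<le>m. ?q i j k) = (\<Sum>i\<le>l. \<Sum>k\<le>n. \<Sum>j\<le>m. ?q i j k * ?c i k)"
    unfolding tcost_def by (simp add: sum_distrib_right)
  also have "\<dots> \<le> (\<Sum>i\<le>l. \<Sum>k\<le>n. \<Sum>j\<le>m. ?q i j k * ?c i j + ?q i j k * ?c j k)"
  proof (intro sum_mono)
    fix i j k assume "i \<in> {..l}" "k \<in> {..n}" "j \<in> {..m}"
    then show "?q i j k * ?c i k \<le> ?q i j k * ?c i j + ?q i j k * ?c j k"
      using mult_left_mono[OF tri glue_nonneg] by (simp flip: distrib_left)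
  qed
  also have "\<dots> = tcost pi l m z1 + tcost pi m n z2"
    by (simp only: sum.distrib first second)
  finally show ?thesis .
qed

end

section \<open>Rerouting mass along a cycle\<close>

definition diag_mass :: "nat \<Rightarrow> (nat \<Rightarrow> nat \<Rightarrow> real) \<Rightarrow> real" where
  "diag_mass m z = (\<Sum>i\<le>m. z i i)"

definition unit_mat :: "nat \<Rightarrow> nat \<Rightarrow> nat \<Rightarrow> nat \<Rightarrow> real" where
  "unit_mat x y a b = (if a = x \<and> b = y then 1 else 0)"

definition cycle :: "nat \<Rightarrow> nat \<Rightarrow> nat \<Rightarrow> nat \<Rightarrow> nat \<Rightarrow> real" where
  "cycle i j k a b = unit_mat i i a b + unit_mat k j a b - unit_mat i j a b - unit_mat k i a b"

lemma sum_unit_mat_row: "y \<le> n \<Longrightarrow> (\<Sum>b\<le>n. unit_mat x y a b) = (if a = x then 1 else 0)"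
  unfolding unit_mat_def by (cases "a = x") auto

lemma sum_unit_mat_col: "x \<le> m \<Longrightarrow> (\<Sum>a\<le>m. unit_mat x y a b) = (if b = y then 1 else 0)"
  unfolding unit_mat_def by (cases "b = y") auto

lemma diag_mass_unit_mat: "diag_mass m (unit_mat x y) = (if x = y \<and> x \<le> m then 1 else 0)"
  unfolding diag_mass_def unit_mat_def by (cases "x = y") (auto intro!: sum.neutral)

lemma diag_mass_cycle:
  assumes "i \<le> m" "k \<le> m" "j \<noteq> i" "k \<noteq> i"
  shows "diag_mass m (cycle i j k) = 1 + (if k = j then 1 else 0)"
proof -
  have "diag_mass m (cycle i j k) = diag_mass m (unit_mat i i) + diag_mass m (unit_mat k j)
          - diag_mass m (unit_mat i j) - diag_mass m (unit_mat k i)"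
    unfolding diag_mass_def cycle_def by (simp add: sum.distrib sum_subtractf)
  then show ?thesis using assms by (simp add: diag_mass_unit_mat)
qed

lemma diag_mass_add_scaled:
  "diag_mass m (\<lambda>a b. z a b + c * e a b) = diag_mass m z + c * diag_mass m e"
  unfolding diag_mass_def by (simp add: sum.distrib sum_distrib_left)

context
  fixes pi :: "nat \<Rightarrow> nat \<Rightarrow> real"
begin

lemma tcost_unit_mat:
  assumes "x \<le> m" "y \<le> n"
  shows "tcost pi m n (unit_mat x y) = dsh pi x y"
proof -
  have "(\<Sum>b\<le>n. unit_mat x y a b * dsh pi a b) = (if a = x then dsh pi x y else 0)" for a
  proof -
    have "(\<Sum>b\<le>n. unit_mat x y a b * dsh pi a b) = (\<Sum>b\<le>n. if a = x \<and> b = y then dsh pi x y else 0)"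
      by (intro sum.cong) (auto simp: unit_mat_def)
    then show ?thesis using \<open>y \<le> n\<close> by (simp add: sum.If_cases)
  qed
  then show ?thesis unfolding tcost_def using \<open>x \<le> m\<close> by simp
qed

lemma tcost_cycle:
  assumes "i \<le> m" "k \<le> m" "i \<le> n" "j \<le> n"
  shows "tcost pi m n (cycle i j k) = dsh pi i i + dsh pi k j - dsh pi i j - dsh pi k i"
proof -
  have "tcost pi m n (cycle i j k) = tcost pi m n (unit_mat i i) + tcost pi m n (unit_mat k j)
          - tcost pi m n (unit_mat i j) - tcost pi m n (unit_mat k i)"
    unfolding tcost_def cycle_def by (simp add: algebra_simps sum.distrib sum_subtractf)
  then show ?thesis using assms by (simp add: tcost_unit_mat)
qed

lemma rerouted_plan:
  assumes z: "z \<in> transport_plans pi m n"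
    and "i \<le> m" "k \<le> m" "i \<le> n" "j \<le> n" "j \<noteq> i" "k \<noteq> i"
    and "0 \<le> \<epsilon>" "\<epsilon> \<le> z i j" "\<epsilon> \<le> z k i"
  shows "(\<lambda>a b. z a b + \<epsilon> * cycle i j k a b) \<in> transport_plans pi m n"
proof (rule transport_plans_add_balanced[OF z])
  fix a assume "a \<le> m"
  show "(\<Sum>b\<le>n. \<epsilon> * cycle i j k a b) = 0"
    using assms by (simp add: cycle_def sum.distrib sum_subtractf sum_unit_mat_row
        flip: sum_distrib_left)
next
  fix b assume "b \<le> n"
  show "(\<Sum>a\<le>m. \<epsilon> * cycle i j k a b) = 0"
    using assms by (simp add: cycle_def sum.distrib sum_subtractf sum_unit_mat_col
        flip: sum_distrib_left)
next
  fix a b assume "a \<le> m" "b \<le> n"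
  then show "0 \<le> z a b + \<epsilon> * cycle i j k a b"
    using assms transport_plansD(1)[OF z] by (auto simp: cycle_def unit_mat_def)
qed

end

section \<open>The costs form a pseudometric\<close>

locale distribution_sequence =
  fixes pi :: "nat \<Rightarrow> nat \<Rightarrow> real"
  assumes nonneg: "\<And>k i. 0 \<le> pi k i"
    and total: "\<And>k. (\<Sum>i\<le>k. pi k i) = 1"
begin

lemma product_plan: "(\<lambda>i j. pi m i * pi n j) \<in> transport_plans pi m n"
  unfolding transport_plans_def
  by (auto simp: sum_distrib_left[symmetric] sum_distrib_right[symmetric] total nonneg)

lemma transport_plans_nonempty: "transport_plans pi m n \<noteq> {}"
  using product_plan by blast

lemma pi_le_1: "i \<le> k \<Longrightarrow> pi k i \<le> 1"
  using member_le_sum[of i "{..k}" "pi k"] nonneg total by auto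

lemma plan_entry_le_1:
  "z \<in> transport_plans pi m n \<Longrightarrow> i \<le> m \<Longrightarrow> j \<le> n \<Longrightarrow> z i j \<le> 1"
  using plan_entry_le_row_mass pi_le_1 order_trans by blast

lemma dsh_nonneg: "0 \<le> dsh pi a b"
proof (induction a b rule: nat_pair_Suc_induct)
  case (Suc_Suc m n)
  have "0 \<le> tcost pi m n z" if "z \<in> transport_plans pi m n" for z
    unfolding tcost_def using Suc_Suc transport_plansD(1)[OF that]
    by (intro sum_nonneg mult_nonneg_nonneg) auto
  then show ?case
    unfolding dsh_Suc_Suc using transport_plans_nonempty by (intro cInf_greatest) auto
qed (simp_all add: dsh_0_left dsh_0_right)

lemma tcost_nonneg: "z \<in> transport_plans pi m n \<Longrightarrow> 0 \<le> tcost pi m n z"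
  unfolding tcost_def
  by (intro sum_nonneg mult_nonneg_nonneg dsh_nonneg) (auto simp: transport_plansD)

lemma optimal_plan_exists: "\<exists>z. z \<in> optimal_plans pi m n"
proof -
  have "\<exists>z\<in>transport_plans pi m n. \<forall>z'\<in>transport_plans pi m n. tcost pi m n z \<le> tcost pi m n z'"
  proof (rule seq_closed_bounded_attains_min[where I = "{..m}" and J = "{..n}" and B = 1])
    show "bdd_below (tcost pi m n ` transport_plans pi m n)"
      using tcost_nonneg by (auto simp: bdd_below_def)
  qed (use transport_plans_nonempty plan_entry_le_1 transport_plansD(1) transport_plans_closed
         tcost_tendsto in auto)
  then show ?thesis unfolding optimal_plans_def by blast
qed

lemma dsh_Suc_Suc_le_tcost:
  "z \<in> transport_plans pi m n \<Longrightarrow> dsh pi (Suc m) (Suc n) \<le> tcost pi m n z"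
  unfolding dsh_Suc_Suc using tcost_nonneg by (intro cInf_lower) (auto simp: bdd_below_def)

lemma dsh_Suc_Suc_eq_tcost:
  "z \<in> optimal_plans pi m n \<Longrightarrow> dsh pi (Suc m) (Suc n) = tcost pi m n z"
  unfolding dsh_Suc_Suc optimal_plans_def by (intro cInf_eq_minimum) auto

lemma dsh_le_1: "dsh pi a b \<le> 1"
proof (induction a b rule: nat_pair_Suc_induct)
  case (Suc_Suc m n)
  let ?z = "\<lambda>i j. pi m i * pi n j"
  have "tcost pi m n ?z \<le> (\<Sum>i\<le>m. \<Sum>j\<le>n. ?z i j * 1)"
    unfolding tcost_def using Suc_Suc by (intro sum_mono mult_left_mono) (auto simp: nonneg)
  also have "\<dots> = 1"
    by (simp add: total flip: sum_distrib_left sum_distrib_right)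
  finally show ?case using dsh_Suc_Suc_le_tcost[OF product_plan[of m n]] by linarith
qed (simp_all add: dsh_0_left dsh_0_right)

lemma dsh_diag: "dsh pi a a = 0"
proof (induction a rule: less_induct)
  case (less a)
  show ?case
  proof (cases a)
    case (Suc m)
    let ?z = "\<lambda>i j. if i = j then pi m i else 0"
    have "?z \<in> transport_plans pi m m"
      unfolding transport_plans_def by (auto simp: nonneg)
    moreover have "tcost pi m m ?z = 0"
      unfolding tcost_def using less Suc by (intro sum.neutral ballI) auto
    ultimately show ?thesis
      using dsh_Suc_Suc_le_tcost dsh_nonneg[of a a] Suc by fastforce
  qed simp
qed

lemma dsh_triangle: "dsh pi a c \<le> dsh pi a b + dsh pi b c"
proof (induction "a + b + c" arbitrary: a b c rule: less_induct)
  case less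
  show ?case
  proof (cases "a = 0 \<or> b = 0 \<or> c = 0")
    case True
    then show ?thesis using dsh_le_1[of a c] dsh_nonneg[of a b] dsh_nonneg[of b c]
      by (auto simp: dsh_0_left dsh_0_right)
  next
    case False
    then obtain l m n where lmn: "a = Suc l" "b = Suc m" "c = Suc n"
      by (metis not0_implies_Suc)
    obtain z1 z2 where z1: "z1 \<in> optimal_plans pi l m" and z2: "z2 \<in> optimal_plans pi m n"
      using optimal_plan_exists by blast
    then have plans: "z1 \<in> transport_plans pi l m" "z2 \<in> transport_plans pi m n"
      by (simp_all add: optimal_plans_def)
    have "dsh pi (Suc l) (Suc n) \<le> tcost pi l n (\<lambda>i k. \<Sum>j\<le>m. glue pi m z1 z2 i j k)"
      by (rule dsh_Suc_Suc_le_tcost[OF glued_plan[OF plans]])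
    also have "\<dots> \<le> tcost pi l m z1 + tcost pi m n z2"
      by (rule tcost_glued_plan_le[OF plans]) (rule less, use lmn in auto)
    finally show ?thesis
      using dsh_Suc_Suc_eq_tcost[OF z1] dsh_Suc_Suc_eq_tcost[OF z2] lmn by simp
  qed
qed

section \<open>Simple optimal plans\<close>

lemma max_diag_mass_optimal_plan_exists:
  assumes "m \<le> n"
  shows "\<exists>z\<in>optimal_plans pi m n. \<forall>z'\<in>optimal_plans pi m n. diag_mass m z' \<le> diag_mass m z"
proof -
  let ?P = "optimal_plans pi m n"
  have plans: "\<And>z. z \<in> ?P \<Longrightarrow> z \<in> transport_plans pi m n" by (simp add: optimal_plans_def)
  have "diag_mass m z \<le> real (Suc m)" if "z \<in> ?P" for z
  proof -
    have "diag_mass m z \<le> (\<Sum>i\<le>m. 1)"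
      unfolding diag_mass_def using plan_entry_le_1[OF plans[OF that]] \<open>m \<le> n\<close>
      by (intro sum_mono) simp
    then show ?thesis by simp
  qed
  then have bdd: "bdd_below ((\<lambda>z. - diag_mass m z) ` ?P)"
    unfolding bdd_below_def by (intro exI[of _ "- real (Suc m)"]) force
  have "\<exists>z\<in>?P. \<forall>z'\<in>?P. - diag_mass m z \<le> - diag_mass m z'"
  proof (rule seq_closed_bounded_attains_min[where I = "{..m}" and J = "{..n}" and B = 1, OF _ _ _ bdd])
    fix zs :: "nat \<Rightarrow> nat \<Rightarrow> nat \<Rightarrow> real" and z
    assume "\<forall>i\<in>{..m}. \<forall>j\<in>{..n}. (\<lambda>k. zs k i j) \<longlonglongrightarrow> z i j"
    then show "(\<lambda>k. - diag_mass m (zs k)) \<longlonglongrightarrow> - diag_mass m z"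
      unfolding diag_mass_def using \<open>m \<le> n\<close> by (intro tendsto_minus tendsto_sum) auto
  next
    show "?P \<noteq> {}" using optimal_plan_exists by blast
  next
    fix z i j assume "z \<in> ?P" "i \<in> {..m}" "j \<in> {..n}"
    then show "\<bar>z i j\<bar> \<le> 1"
      using plan_entry_le_1 transport_plansD(1) plans by (simp add: abs_le_iff) fastforce
  qed (use optimal_plans_closed in auto)
  then show ?thesis by auto
qed

lemma optimal_plan_diag_mass_improvable:
  assumes z: "z \<in> optimal_plans pi m n" and "i \<le> m" "i \<le> n"
    and below: "z i i < pi m i" "z i i < pi n i"
  shows "\<exists>z'\<in>optimal_plans pi m n. diag_mass m z < diag_mass m z'"
proof -
  have plan: "z \<in> transport_plans pi m n" using z by (simp add: optimal_plans_def)
  obtain j where j: "j \<le> n" "j \<noteq> i" "0 < z i j"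
    using exists_other_pos_if_lt_sum[of "{..n}" i "z i"] below(1) \<open>i \<le> m\<close> \<open>i \<le> n\<close>
      transport_plansD[OF plan] by auto
  obtain k where k: "k \<le> m" "k \<noteq> i" "0 < z k i"
    using exists_other_pos_if_lt_sum[of "{..m}" i "\<lambda>k. z k i"] below(2) \<open>i \<le> m\<close> \<open>i \<le> n\<close>
      transport_plansD[OF plan] by auto
  define \<epsilon> where "\<epsilon> = min (z i j) (z k i)"
  have "0 < \<epsilon>" using j k by (simp add: \<epsilon>_def)
  define z' where "z' a b = z a b + \<epsilon> * cycle i j k a b" for a b
  have "z' \<in> transport_plans pi m n"
    unfolding z'_def using rerouted_plan[OF plan] assms j k \<open>0 < \<epsilon>\<close> by (simp add: \<epsilon>_def)
  moreover have "tcost pi m n z' \<le> tcost pi m n z"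
  proof -
    have "dsh pi k j \<le> dsh pi k i + dsh pi i j" by (rule dsh_triangle)
    then have "tcost pi m n (cycle i j k) \<le> 0"
      using tcost_cycle[of i m k n j] assms j k by (simp add: dsh_diag)
    then show ?thesis
      unfolding z'_def tcost_add tcost_scale using \<open>0 < \<epsilon>\<close> by (simp add: mult_nonneg_nonpos)
  qed
  ultimately have "z' \<in> optimal_plans pi m n"
    using z by (auto simp: optimal_plans_def intro: order_trans)
  moreover have "diag_mass m z < diag_mass m z'"
    unfolding z'_def diag_mass_add_scaled using diag_mass_cycle[of i m k j] assms j k \<open>0 < \<epsilon>\<close>
    by simp
  ultimately show ?thesis by blast
qed

lemma simple_optimal_plan_exists:
  assumes "m \<le> n"
  shows "\<exists>z\<in>optimal_plans pi m n. \<forall>i\<le>m. z i i = min (pi m i) (pi n i)"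
proof -
  obtain z where z: "z \<in> optimal_plans pi m n"
    and max: "\<And>z'. z' \<in> optimal_plans pi m n \<Longrightarrow> diag_mass m z' \<le> diag_mass m z"
    using max_diag_mass_optimal_plan_exists[OF assms] by blast
  have plan: "z \<in> transport_plans pi m n" using z by (simp add: optimal_plans_def)
  have "z i i = min (pi m i) (pi n i)" if i: "i \<le> m" for i
  proof (rule ccontr)
    assume "z i i \<noteq> min (pi m i) (pi n i)"
    moreover have "i \<le> n" using i assms by simp
    moreover note plan_entry_le_row_mass[OF plan i \<open>i \<le> n\<close>]
      plan_entry_le_col_mass[OF plan i \<open>i \<le> n\<close>]
    ultimately obtain z' where "z' \<in> optimal_plans pi m n" "diag_mass m z < diag_mass m z'"
      using optimal_plan_diag_mass_improvable[OF z i] by fastforce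
    then show False using max by fastforce
  qed
  with z show ?thesis by blast
qed

end

theorem proposition1:
  fixes pi :: "nat \<Rightarrow> nat \<Rightarrow> real" and m n :: nat
  assumes nonneg: "\<And>k i. 0 \<le> pi k i"
    and supp: "\<And>k i. k < i \<Longrightarrow> pi k i = 0"
    and total: "\<And>k. (\<Sum>i\<le>k. pi k i) = 1"
    and distinct: "inj pi"
    and mn: "m \<le> n"
  shows "\<exists>z \<in> transport_plans pi m n.
           (\<forall>z' \<in> transport_plans pi m n. tcost pi m n z \<le> tcost pi m n z')
         \<and> (\<forall>i\<le>m. z i i = min (pi m i) (pi n i))"
proof -
  interpret distribution_sequence pi using nonneg total by unfold_locales
  show ?thesis using simple_optimal_plan_exists[OF mn] by (auto simp: optimal_plans_def)
qed

end
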